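(* Let $\tau\colon\tilde{\mathcal{E}}\to\mathcal{E}$ be a finite-dimensional irreducible Abelian covering and let $\omega$ be a nontrivial conservation law of $\mathcal{E}$. Then the pull-back $\tau^*\omega$ is a trivial conservation law of $\tilde{\mathcal{E}}$ if and only if $[\omega]\in\mathcal{L}_\tau$.
   Context: Setting: $\mathcal{E}$ is a differentially connected infinitely prolonged equation with two independent variables $x,y$ and total derivatives $D_x,D_y$. A conservation law is a horizontal 1-form $\omega=X\,dx+Y\,dy$ with $D_xY-D_yX=0$; it is trivial if $\omega=d_hP=D_xP\,dx+D_yP\,dy$ for some function $P$; $\mathrm{CL}(\mathcal{E})$ is the space of conservation laws modulo trivial ones. For a covering $\tau\colon\tilde{\mathcal{E}}\to\mathcal{E}$ with total derivatives $\tilde D_x,\tilde D_y$, conservation laws of $\tilde{\mathcal{E}}$ and their triviality are defined the same way using $\tilde D_x,\tilde D_y$ and functions on $\tilde{\mathcal{E}}$. A covering of rank $r$ is Abelian if fiber coordinates $w^1,\dots,w^r$ can be chosen with $\tilde D_x=D_x+\sum_\alpha X^\alpha\partial/\partial w^\alpha$, $\tilde D_y=D_y+\sum_\alpha Y^\alpha\partial/\partial w^\alpha$, $X^\alpha,Y^\alpha\in\mathcal{F}(\mathcal{E})$; it is irreducible if $\tilde D_xh=\tilde D_yh=0$ has only constant solutions. $\mathcal{L}_\tau\subset\mathrm{CL}(\mathcal{E})$ is the subspace spanned by the classes $[X^\alpha dx+Y^\alpha dy]$, $\alpha=1,\dots,r$ (it depends only on the equivalence class of $\tau$). *)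

theory Defs
  imports "HOL-Analysis.Analysis"
begin

text \<open>Abstract model of a differentially connected infinitely prolonged equation
  with two independent variables: its points form a type 'p, its smooth functions
  form the set F, and the total derivatives are Dx, Dy acting on F.\<close>

definition diff_conn_eq ::
  "('p \<Rightarrow> real) set \<Rightarrow> (('p \<Rightarrow> real) \<Rightarrow> ('p \<Rightarrow> real)) \<Rightarrow> (('p \<Rightarrow> real) \<Rightarrow> ('p \<Rightarrow> real)) \<Rightarrow> bool" where
  "diff_conn_eq F Dx Dy \<longleftrightarrow>
     (\<forall>c. (\<lambda>_. c) \<in> F) \<and>
     (\<forall>f\<in>F. \<forall>g\<in>F. (\<lambda>p. f p + g p) \<in> F \<and> (\<lambda>p. f p * g p) \<in> F) \<and>
     (\<forall>D\<in>{Dx, Dy}.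
        (\<forall>f\<in>F. D f \<in> F) \<and>
        (\<forall>f\<in>F. \<forall>g\<in>F. D (\<lambda>p. f p + g p) = (\<lambda>p. D f p + D g p)) \<and>
        (\<forall>f\<in>F. \<forall>c. D (\<lambda>p. c * f p) = (\<lambda>p. c * D f p)) \<and>
        (\<forall>f\<in>F. \<forall>g\<in>F. D (\<lambda>p. f p * g p) = (\<lambda>p. D f p * g p + f p * D g p))) \<and>
     (\<forall>f\<in>F. Dx (Dy f) = Dy (Dx f)) \<and>
     (\<forall>f\<in>F. Dx f = (\<lambda>_. 0) \<and> Dy f = (\<lambda>_. 0) \<longrightarrow> (\<exists>c. f = (\<lambda>_. c)))"

text \<open>Conservation laws (X dx + Y dy with D_x Y - D_y X = 0) and trivial ones,
  for an arbitrary space of functions with total derivatives.\<close>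

definition conservation_law ::
  "('q \<Rightarrow> real) set \<Rightarrow> (('q \<Rightarrow> real) \<Rightarrow> ('q \<Rightarrow> real)) \<Rightarrow> (('q \<Rightarrow> real) \<Rightarrow> ('q \<Rightarrow> real))
   \<Rightarrow> ('q \<Rightarrow> real) \<Rightarrow> ('q \<Rightarrow> real) \<Rightarrow> bool" where
  "conservation_law F Dx Dy X Y \<longleftrightarrow> X \<in> F \<and> Y \<in> F \<and> (\<lambda>q. Dx Y q - Dy X q) = (\<lambda>_. 0)"

definition trivial_cl ::
  "('q \<Rightarrow> real) set \<Rightarrow> (('q \<Rightarrow> real) \<Rightarrow> ('q \<Rightarrow> real)) \<Rightarrow> (('q \<Rightarrow> real) \<Rightarrow> ('q \<Rightarrow> real))
   \<Rightarrow> ('q \<Rightarrow> real) \<Rightarrow> ('q \<Rightarrow> real) \<Rightarrow> bool" where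
  "trivial_cl F Dx Dy X Y \<longleftrightarrow> (\<exists>P\<in>F. X = Dx P \<and> Y = Dy P)"

text \<open>Abelian covering of rank CARD('r): points of the covering are pairs (p, w),
  w = (w^1,...,w^r) the fibre coordinates.  Partial derivative in w^a:\<close>

definition dw :: "'r::finite \<Rightarrow> ('p \<times> (real^'r) \<Rightarrow> real) \<Rightarrow> 'p \<times> (real^'r) \<Rightarrow> real" where
  "dw a P = (\<lambda>(p, w). deriv (\<lambda>t. P (p, w + t *\<^sub>R axis a 1)) 0)"

coinductive cov_smooth ::
  "('p \<Rightarrow> real) set \<Rightarrow> (('p \<Rightarrow> real) \<Rightarrow> ('p \<Rightarrow> real)) \<Rightarrow> (('p \<Rightarrow> real) \<Rightarrow> ('p \<Rightarrow> real))
   \<Rightarrow> ('p \<times> (real^'r::finite) \<Rightarrow> real) \<Rightarrow> bool"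
  for F Dx Dy where
  "\<lbrakk> \<forall>w. (\<lambda>p. P (p, w)) \<in> F;
     \<forall>p w. (\<lambda>v. P (p, v)) differentiable (at w);
     \<forall>a p w. \<forall>D\<in>{Dx, Dy}.
        ((\<lambda>t. D (\<lambda>q. P (q, w + t *\<^sub>R axis a 1)) p) has_real_derivative
           D (\<lambda>q. dw a P (q, w)) p) (at 0);
     \<forall>a. cov_smooth F Dx Dy (dw a P) \<rbrakk>
   \<Longrightarrow> cov_smooth F Dx Dy P"

definition cov_funs ::
  "('p \<Rightarrow> real) set \<Rightarrow> (('p \<Rightarrow> real) \<Rightarrow> ('p \<Rightarrow> real)) \<Rightarrow> (('p \<Rightarrow> real) \<Rightarrow> ('p \<Rightarrow> real))
   \<Rightarrow> ('p \<times> (real^'r::finite) \<Rightarrow> real) set" where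
  "cov_funs F Dx Dy = {P. cov_smooth F Dx Dy P}"

definition tD :: "(('p \<Rightarrow> real) \<Rightarrow> ('p \<Rightarrow> real)) \<Rightarrow> ('r::finite \<Rightarrow> 'p \<Rightarrow> real)
   \<Rightarrow> ('p \<times> (real^'r) \<Rightarrow> real) \<Rightarrow> ('p \<times> (real^'r) \<Rightarrow> real)" where
  "tD D Xs P = (\<lambda>(p, w). D (\<lambda>q. P (q, w)) p + (\<Sum>a\<in>UNIV. Xs a p * dw a P (p, w)))"

text \<open>Abelian covering data: X^a, Y^a are functions on E and the covering
  total derivatives commute (equivalently D_x Y^a = D_y X^a).\<close>

definition abelian_covering ::
  "('p \<Rightarrow> real) set \<Rightarrow> (('p \<Rightarrow> real) \<Rightarrow> ('p \<Rightarrow> real)) \<Rightarrow> (('p \<Rightarrow> real) \<Rightarrow> ('p \<Rightarrow> real))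
   \<Rightarrow> ('r::finite \<Rightarrow> 'p \<Rightarrow> real) \<Rightarrow> ('r \<Rightarrow> 'p \<Rightarrow> real) \<Rightarrow> bool" where
  "abelian_covering F Dx Dy Xs Ys \<longleftrightarrow> (\<forall>a. conservation_law F Dx Dy (Xs a) (Ys a))"

definition irreducible_cov ::
  "('p \<Rightarrow> real) set \<Rightarrow> (('p \<Rightarrow> real) \<Rightarrow> ('p \<Rightarrow> real)) \<Rightarrow> (('p \<Rightarrow> real) \<Rightarrow> ('p \<Rightarrow> real))
   \<Rightarrow> ('r::finite \<Rightarrow> 'p \<Rightarrow> real) \<Rightarrow> ('r \<Rightarrow> 'p \<Rightarrow> real) \<Rightarrow> bool" where
  "irreducible_cov F Dx Dy Xs Ys \<longleftrightarrow>
     (\<forall>h \<in> cov_funs F Dx Dy. tD Dx Xs h = (\<lambda>_. 0) \<and> tD Dy Ys h = (\<lambda>_. 0)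
        \<longrightarrow> (\<exists>c. h = (\<lambda>_. c)))"

text \<open>[X dx + Y dy] lies in L_tau, the span of the classes [X^a dx + Y^a dy] in CL(E).\<close>

definition in_L_tau ::
  "('p \<Rightarrow> real) set \<Rightarrow> (('p \<Rightarrow> real) \<Rightarrow> ('p \<Rightarrow> real)) \<Rightarrow> (('p \<Rightarrow> real) \<Rightarrow> ('p \<Rightarrow> real))
   \<Rightarrow> ('r::finite \<Rightarrow> 'p \<Rightarrow> real) \<Rightarrow> ('r \<Rightarrow> 'p \<Rightarrow> real) \<Rightarrow> ('p \<Rightarrow> real) \<Rightarrow> ('p \<Rightarrow> real) \<Rightarrow> bool" where
  "in_L_tau F Dx Dy Xs Ys X Y \<longleftrightarrow>
     (\<exists>c :: 'r \<Rightarrow> real. trivial_cl F Dx Dy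
        (\<lambda>p. X p - (\<Sum>a\<in>UNIV. c a * Xs a p)) (\<lambda>p. Y p - (\<Sum>a\<in>UNIV. c a * Ys a p)))"

definition pullback :: "('p \<Rightarrow> real) \<Rightarrow> ('p \<times> (real^'r) \<Rightarrow> real)" where
  "pullback f = (\<lambda>(p, w). f p)"

end

theory Submission
  imports Defs
begin

text \<open>If G is a potential of the pulled-back law, differentiate tD_x G = X and tD_y G = Y in the
  fibre coordinate w^a.  Since d/dw^a commutes with the total derivatives of E and (by the
  Schwarz--Clairaut theorem) with the other fibre derivatives, dG/dw^a is annihilated by both
  total derivatives of the covering, so by irreducibility it is a constant c_a.  Restricting G to
  the zero section then gives a potential of \<omega> - \<Sum> c_a (X^a dx + Y^a dy).  Conversely, a potential
  P of the latter yields the potential P + \<Sum> c_a w^a of the pull-back.\<close>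

lemma DERIV_along_line:
  fixes g g' :: "'v::real_normed_vector \<Rightarrow> real"
  assumes "\<And>v. ((\<lambda>t. g (v + t *\<^sub>R A)) has_real_derivative g' v) (at 0)"
  shows "((\<lambda>t. g (w + t *\<^sub>R A)) has_real_derivative g' (w + t0 *\<^sub>R A)) (at t0)"
proof -
  have "((\<lambda>t. g ((w + t0 *\<^sub>R A) + t *\<^sub>R A)) has_real_derivative g' (w + t0 *\<^sub>R A)) (at 0)"
    by (rule assms)
  moreover have "(\<lambda>t. g ((w + t0 *\<^sub>R A) + t *\<^sub>R A)) = (\<lambda>t. g (w + (t + t0) *\<^sub>R A))"
    by (simp add: algebra_simps)
  ultimately show ?thesis using DERIV_shift[of "\<lambda>t. g (w + t *\<^sub>R A)" _ 0 t0] by simp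
qed

lemma second_difference_mean_value:
  fixes f fa fab :: "'v::real_normed_vector \<Rightarrow> real"
  assumes da: "\<And>v. ((\<lambda>t. f (v + t *\<^sub>R A)) has_real_derivative fa v) (at 0)"
    and dab: "\<And>v. ((\<lambda>t. fa (v + t *\<^sub>R B)) has_real_derivative fab v) (at 0)"
    and "s > 0" "t > 0"
  obtains \<sigma> \<tau> where "0 < \<sigma>" "\<sigma> < s" "0 < \<tau>" "\<tau> < t"
    "f (v + s *\<^sub>R A + t *\<^sub>R B) - f (v + s *\<^sub>R A) - f (v + t *\<^sub>R B) + f v
       = s * t * fab (v + \<sigma> *\<^sub>R A + \<tau> *\<^sub>R B)"
proof -
  define g where "g \<sigma> = f ((v + t *\<^sub>R B) + \<sigma> *\<^sub>R A) - f (v + \<sigma> *\<^sub>R A)" for \<sigma>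
  have "DERIV g x :> fa ((v + t *\<^sub>R B) + x *\<^sub>R A) - fa (v + x *\<^sub>R A)" for x
    unfolding g_def by (intro DERIV_diff DERIV_along_line[OF da])
  from MVT2[OF \<open>s > 0\<close> this] obtain \<sigma> where \<sigma>: "0 < \<sigma>" "\<sigma> < s"
    and g_diff: "g s - g 0 = s * (fa ((v + \<sigma> *\<^sub>R A) + t *\<^sub>R B) - fa (v + \<sigma> *\<^sub>R A))"
    by (auto simp: algebra_simps)
  have "DERIV (\<lambda>\<tau>. fa ((v + \<sigma> *\<^sub>R A) + \<tau> *\<^sub>R B)) x :> fab ((v + \<sigma> *\<^sub>R A) + x *\<^sub>R B)" for x
    by (rule DERIV_along_line[OF dab])
  from MVT2[OF \<open>t > 0\<close> this] obtain \<tau> where \<tau>: "0 < \<tau>" "\<tau> < t"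
    and fa_diff: "fa ((v + \<sigma> *\<^sub>R A) + t *\<^sub>R B) - fa (v + \<sigma> *\<^sub>R A) = t * fab (v + \<sigma> *\<^sub>R A + \<tau> *\<^sub>R B)"
    by auto
  have "f (v + s *\<^sub>R A + t *\<^sub>R B) - f (v + s *\<^sub>R A) - f (v + t *\<^sub>R B) + f v = g s - g 0"
    unfolding g_def by (simp add: algebra_simps)
  also have "\<dots> = s * t * fab (v + \<sigma> *\<^sub>R A + \<tau> *\<^sub>R B)"
    using g_diff fa_diff by simp
  finally show ?thesis using that \<sigma> \<tau> by blast
qed

lemma norm_scaleR_add_le:
  fixes A B :: "'v::real_normed_vector"
  assumes "0 \<le> a" "a \<le> s" "0 \<le> b" "b \<le> s"
  shows "norm (a *\<^sub>R A + b *\<^sub>R B) \<le> s * (norm A + norm B)"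
proof -
  have "norm (a *\<^sub>R A + b *\<^sub>R B) \<le> a * norm A + b * norm B"
    using assms by (metis abs_of_nonneg norm_scaleR norm_triangle_ineq)
  also have "\<dots> \<le> s * norm A + s * norm B"
    using assms by (intro add_mono mult_right_mono) auto
  finally show ?thesis by (simp add: distrib_left)
qed

lemma mixed_derivatives_agree_nearby:
  fixes f fa fb fab fba :: "'v::real_normed_vector \<Rightarrow> real"
  assumes da: "\<And>v. ((\<lambda>t. f (v + t *\<^sub>R A)) has_real_derivative fa v) (at 0)"
    and db: "\<And>v. ((\<lambda>t. f (v + t *\<^sub>R B)) has_real_derivative fb v) (at 0)"
    and dab: "\<And>v. ((\<lambda>t. fa (v + t *\<^sub>R B)) has_real_derivative fab v) (at 0)"
    and dba: "\<And>v. ((\<lambda>t. fb (v + t *\<^sub>R A)) has_real_derivative fba v) (at 0)"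
    and "s > 0"
  obtains \<sigma> \<tau> \<sigma>' \<tau>' where "0 < \<sigma>" "\<sigma> < s" "0 < \<tau>" "\<tau> < s" "0 < \<sigma>'" "\<sigma>' < s" "0 < \<tau>'" "\<tau>' < s"
    "fab (v + \<sigma> *\<^sub>R A + \<tau> *\<^sub>R B) = fba (v + \<sigma>' *\<^sub>R A + \<tau>' *\<^sub>R B)"
proof -
  obtain \<sigma> \<tau> where "0 < \<sigma>" "\<sigma> < s" "0 < \<tau>" "\<tau> < s" and AB:
    "f (v + s *\<^sub>R A + s *\<^sub>R B) - f (v + s *\<^sub>R A) - f (v + s *\<^sub>R B) + f v
       = s * s * fab (v + \<sigma> *\<^sub>R A + \<tau> *\<^sub>R B)"
    using second_difference_mean_value[OF da dab \<open>s > 0\<close> \<open>s > 0\<close>] by blast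
  obtain \<tau>' \<sigma>' where "0 < \<tau>'" "\<tau>' < s" "0 < \<sigma>'" "\<sigma>' < s" and BA:
    "f (v + s *\<^sub>R B + s *\<^sub>R A) - f (v + s *\<^sub>R B) - f (v + s *\<^sub>R A) + f v
       = s * s * fba (v + \<tau>' *\<^sub>R B + \<sigma>' *\<^sub>R A)"
    using second_difference_mean_value[OF db dba \<open>s > 0\<close> \<open>s > 0\<close>] by blast
  have "v + s *\<^sub>R B + s *\<^sub>R A = v + s *\<^sub>R A + s *\<^sub>R B" by (simp add: algebra_simps)
  with AB BA \<open>s > 0\<close> have "fab (v + \<sigma> *\<^sub>R A + \<tau> *\<^sub>R B) = fba (v + \<sigma>' *\<^sub>R A + \<tau>' *\<^sub>R B)"
    by (simp add: algebra_simps)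
  with that \<open>0 < \<sigma>\<close> \<open>\<sigma> < s\<close> \<open>0 < \<tau>\<close> \<open>\<tau> < s\<close> \<open>0 < \<sigma>'\<close> \<open>\<sigma>' < s\<close> \<open>0 < \<tau>'\<close> \<open>\<tau>' < s\<close>
  show ?thesis by blast
qed

text \<open>Schwarz--Clairaut: both mixed derivatives are limits of the same second difference
  quotient, by the mean value theorem applied in either order.\<close>

lemma mixed_directional_derivatives_eq:
  fixes f fa fb fab fba :: "'v::real_normed_vector \<Rightarrow> real"
  assumes da: "\<And>v. ((\<lambda>t. f (v + t *\<^sub>R A)) has_real_derivative fa v) (at 0)"
    and db: "\<And>v. ((\<lambda>t. f (v + t *\<^sub>R B)) has_real_derivative fb v) (at 0)"
    and dab: "\<And>v. ((\<lambda>t. fa (v + t *\<^sub>R B)) has_real_derivative fab v) (at 0)"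
    and dba: "\<And>v. ((\<lambda>t. fb (v + t *\<^sub>R A)) has_real_derivative fba v) (at 0)"
    and "isCont fab v" "isCont fba v"
  shows "fab v = fba v"
proof (rule ccontr)
  assume "fab v \<noteq> fba v"
  define e where "e = \<bar>fab v - fba v\<bar> / 2"
  have "e > 0" using \<open>fab v \<noteq> fba v\<close> by (simp add: e_def)
  obtain d1 where "d1 > 0" and d1: "\<And>x. dist x v < d1 \<Longrightarrow> dist (fab x) (fab v) < e"
    using \<open>isCont fab v\<close> \<open>e > 0\<close> unfolding continuous_at_eps_delta by blast
  obtain d2 where "d2 > 0" and d2: "\<And>x. dist x v < d2 \<Longrightarrow> dist (fba x) (fba v) < e"
    using \<open>isCont fba v\<close> \<open>e > 0\<close> unfolding continuous_at_eps_delta by blast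
  have "norm A + norm B + 1 > 0" by (smt (verit) norm_ge_zero)
  define s where "s = min d1 d2 / (norm A + norm B + 1)"
  have "s > 0" using \<open>d1 > 0\<close> \<open>d2 > 0\<close> \<open>norm A + norm B + 1 > 0\<close> by (simp add: s_def)
  have near: "dist (v + a *\<^sub>R A + b *\<^sub>R B) v < min d1 d2"
    if "0 < a" "a < s" "0 < b" "b < s" for a b
  proof -
    have "dist (v + a *\<^sub>R A + b *\<^sub>R B) v \<le> s * (norm A + norm B)"
      using that norm_scaleR_add_le[of a s b A B] by (simp add: dist_norm)
    also have "\<dots> < s * (norm A + norm B + 1)"
      using \<open>s > 0\<close> by simp
    also have "\<dots> = min d1 d2"
      using \<open>norm A + norm B + 1 > 0\<close> by (simp add: s_def)
    finally show ?thesis .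
  qed
  obtain \<sigma> \<tau> \<sigma>' \<tau>' where "0 < \<sigma>" "\<sigma> < s" "0 < \<tau>" "\<tau> < s" "0 < \<sigma>'" "\<sigma>' < s" "0 < \<tau>'" "\<tau>' < s"
    and same: "fab (v + \<sigma> *\<^sub>R A + \<tau> *\<^sub>R B) = fba (v + \<sigma>' *\<^sub>R A + \<tau>' *\<^sub>R B)"
    using mixed_derivatives_agree_nearby[OF da db dab dba \<open>s > 0\<close>] by blast
  have "dist (fab (v + \<sigma> *\<^sub>R A + \<tau> *\<^sub>R B)) (fab v) < e"
    using d1 near[of \<sigma> \<tau>] \<open>0 < \<sigma>\<close> \<open>\<sigma> < s\<close> \<open>0 < \<tau>\<close> \<open>\<tau> < s\<close> by auto
  moreover have "dist (fba (v + \<sigma>' *\<^sub>R A + \<tau>' *\<^sub>R B)) (fba v) < e"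
    using d2 near[of \<sigma>' \<tau>'] \<open>0 < \<sigma>'\<close> \<open>\<sigma>' < s\<close> \<open>0 < \<tau>'\<close> \<open>\<tau>' < s\<close> by auto
  ultimately have "\<bar>fab v - fba v\<bar> < 2 * e" using same by (simp add: dist_real_def)
  then show False by (simp add: e_def)
qed

lemma
  assumes "diff_conn_eq F Dx Dy"
  shows diff_conn_eq_const: "(\<lambda>_. c) \<in> F"
    and diff_conn_eq_add: "\<lbrakk>f \<in> F; g \<in> F\<rbrakk> \<Longrightarrow> (\<lambda>p. f p + g p) \<in> F"
    and total_derivative_add: "\<lbrakk>D \<in> {Dx, Dy}; f \<in> F; g \<in> F\<rbrakk> \<Longrightarrow> D (\<lambda>p. f p + g p) = (\<lambda>p. D f p + D g p)"
    and total_derivative_scale: "\<lbrakk>D \<in> {Dx, Dy}; f \<in> F\<rbrakk> \<Longrightarrow> D (\<lambda>p. c * f p) = (\<lambda>p. c * D f p)"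
    and total_derivative_mult: "\<lbrakk>D \<in> {Dx, Dy}; f \<in> F; g \<in> F\<rbrakk> \<Longrightarrow> D (\<lambda>p. f p * g p) = (\<lambda>p. D f p * g p + f p * D g p)"
  using assms unfolding diff_conn_eq_def by auto

lemma total_derivative_const:
  assumes "diff_conn_eq F Dx Dy" "D \<in> {Dx, Dy}"
  shows "D (\<lambda>_. k) = (\<lambda>_. 0)"
proof -
  have one: "(\<lambda>_. 1) \<in> F" using diff_conn_eq_const[OF assms(1)] .
  have "D (\<lambda>_. 1) = (\<lambda>p. D (\<lambda>_. 1) p + D (\<lambda>_. 1) p)"
    using total_derivative_mult[OF assms one one] by simp
  then have "D (\<lambda>_. 1) = (\<lambda>_. 0)"
    by (metis add_cancel_left_right)
  then show ?thesis
    using total_derivative_scale[OF assms one, of k] by simp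
qed

lemma total_derivative_add_const:
  assumes "diff_conn_eq F Dx Dy" "D \<in> {Dx, Dy}" "f \<in> F"
  shows "D (\<lambda>p. f p + k) = D f"
  using total_derivative_add[OF assms diff_conn_eq_const[OF assms(1)]]
  by (simp add: total_derivative_const[OF assms(1,2)])

lemma
  assumes "cov_smooth F Dx Dy P"
  shows cov_smooth_slice: "(\<lambda>p. P (p, w)) \<in> F"
    and cov_smooth_differentiable: "(\<lambda>v. P (p, v)) differentiable (at w)"
    and cov_smooth_total_derivative_dw: "D \<in> {Dx, Dy} \<Longrightarrow>
      ((\<lambda>t. D (\<lambda>q. P (q, w + t *\<^sub>R axis a 1)) p) has_real_derivative D (\<lambda>q. dw a P (q, w)) p) (at 0)"
    and cov_smooth_dw: "cov_smooth F Dx Dy (dw a P)"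
  using assms by (auto elim: cov_smooth.cases)

lemma cov_smooth_has_dw_derivative:
  assumes "cov_smooth F Dx Dy P"
  shows "((\<lambda>t. P (p, w + t *\<^sub>R axis a 1)) has_real_derivative dw a P (p, w)) (at 0)"
proof -
  have "(\<lambda>t. w + t *\<^sub>R axis a 1) differentiable (at 0)"
    by (auto intro!: derivative_eq_intros simp: differentiable_def)
  moreover have "(\<lambda>v. P (p, v)) differentiable (at (w + 0 *\<^sub>R axis a 1))"
    using cov_smooth_differentiable[OF assms] .
  ultimately have "(\<lambda>t. P (p, w + t *\<^sub>R axis a 1)) differentiable (at 0)"
    using differentiable_chain_at by (fastforce simp: o_def)
  then show ?thesis
    by (simp add: dw_def DERIV_deriv_iff_real_differentiable)
qed

lemma cov_smooth_dw_commute: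
  assumes "cov_smooth F Dx Dy P"
  shows "dw b (dw a P) (p, w) = dw a (dw b P) (p, w)"
proof (rule mixed_directional_derivatives_eq[where f="\<lambda>v. P (p, v)" and A="axis a 1" and B="axis b 1"
      and fa="\<lambda>v. dw a P (p, v)" and fb="\<lambda>v. dw b P (p, v)"])
  show "isCont (\<lambda>v. dw b (dw a P) (p, v)) w"
    using cov_smooth_differentiable[OF cov_smooth_dw[OF cov_smooth_dw[OF assms]]]
    by (rule differentiable_imp_continuous_within)
  show "isCont (\<lambda>v. dw a (dw b P) (p, v)) w"
    using cov_smooth_differentiable[OF cov_smooth_dw[OF cov_smooth_dw[OF assms]]]
    by (rule differentiable_imp_continuous_within)
qed (rule cov_smooth_has_dw_derivative[OF assms] cov_smooth_has_dw_derivative[OF cov_smooth_dw[OF assms]])+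

lemma tD_dw_eq_0:
  fixes Zs :: "'r::finite \<Rightarrow> 'p \<Rightarrow> real"
  assumes G: "cov_smooth F Dx Dy G" and D: "D \<in> {Dx, Dy}"
    and "tD D Zs G = (pullback Z :: 'p \<times> (real^'r) \<Rightarrow> real)"
  shows "tD D Zs (dw a G) = (\<lambda>_. 0)"
proof
  fix z :: "'p \<times> (real^'r)"
  obtain p w where z: "z = (p, w)" by (cases z)
  have "((\<lambda>t. tD D Zs G (p, w + t *\<^sub>R axis a 1)) has_real_derivative
      D (\<lambda>q. dw a G (q, w)) p + (\<Sum>b\<in>UNIV. Zs b p * dw a (dw b G) (p, w))) (at 0)"
    unfolding tD_def case_prod_conv
    by (intro DERIV_add DERIV_sum DERIV_cmult cov_smooth_total_derivative_dw[OF G D]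
        cov_smooth_has_dw_derivative[OF cov_smooth_dw[OF G]])
  moreover have "(\<lambda>t. tD D Zs G (p, w + t *\<^sub>R axis a 1)) = (\<lambda>_. Z p)"
    using assms(3) by (simp add: pullback_def)
  ultimately have "D (\<lambda>q. dw a G (q, w)) p + (\<Sum>b\<in>UNIV. Zs b p * dw a (dw b G) (p, w)) = 0"
    using DERIV_unique[OF _ DERIV_const] by simp
  then show "tD D Zs (dw a G) z = 0"
    by (simp add: tD_def z cov_smooth_dw_commute[OF G])
qed

definition affine_in_fibre :: "('p \<Rightarrow> real) \<Rightarrow> ('r::finite \<Rightarrow> real) \<Rightarrow> 'p \<times> (real^'r) \<Rightarrow> real" where
  "affine_in_fibre f c = (\<lambda>(p, w). f p + (\<Sum>a\<in>UNIV. c a * w $ a))"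

lemma dw_affine_in_fibre:
  fixes c :: "'r::finite \<Rightarrow> real" and f :: "'p \<Rightarrow> real"
  shows "dw a (affine_in_fibre f c) = (\<lambda>_. c a)"
proof
  fix z :: "'p \<times> (real^'r)"
  obtain p w where z: "z = (p, w)" by (cases z)
  have shifted: "(\<lambda>b. c b * (w + t *\<^sub>R axis a 1) $ b) = (\<lambda>b. c b * w $ b + (if b = a then t * c a else 0))" for t
    by (auto simp: axis_def algebra_simps)
  have "(\<Sum>b\<in>UNIV. c b * (w + t *\<^sub>R axis a 1) $ b) = (\<Sum>b\<in>UNIV. c b * w $ b) + t * c a" for t
    by (simp only: shifted sum.distrib) simp
  moreover have "((\<lambda>t. f p + ((\<Sum>b\<in>UNIV. c b * w $ b) + t * c a)) has_real_derivative c a) (at 0)"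
    by (auto intro!: derivative_eq_intros)
  ultimately show "dw a (affine_in_fibre f c) z = c a"
    by (simp add: dw_def z affine_in_fibre_def DERIV_imp_deriv)
qed

lemma affine_in_fibre_differentiable:
  "(\<lambda>v. affine_in_fibre f c (p, v)) differentiable (at w)"
  unfolding affine_in_fibre_def case_prod_conv
  by (intro differentiable_add differentiable_const differentiable_sum ballI differentiable_mult
      bounded_linear_imp_differentiable bounded_linear_vec_nth) simp

lemma affine_in_fibre_slice:
  assumes "diff_conn_eq F Dx Dy" "f \<in> F"
  shows "(\<lambda>p. affine_in_fibre f c (p, w)) \<in> F"
  using diff_conn_eq_add[OF assms(1) assms(2) diff_conn_eq_const[OF assms(1)]]
  by (simp add: affine_in_fibre_def)

lemma total_derivative_affine_in_fibre_slice:
  assumes "diff_conn_eq F Dx Dy" "D \<in> {Dx, Dy}" "f \<in> F"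
  shows "D (\<lambda>p. affine_in_fibre f c (p, w)) = D f"
  using total_derivative_add_const[OF assms] by (simp add: affine_in_fibre_def)

lemma cov_smooth_affine_in_fibre:
  fixes f :: "'p \<Rightarrow> real" and c :: "'r::finite \<Rightarrow> real"
  assumes "diff_conn_eq F Dx Dy" "f \<in> F"
  shows "cov_smooth F Dx Dy (affine_in_fibre f c)"
proof (rule cov_smooth.coinduct[where X="\<lambda>P. \<exists>g\<in>F. \<exists>e. P = affine_in_fibre g e"])
  show "\<exists>g\<in>F. \<exists>e. affine_in_fibre f c = affine_in_fibre g e"
    using assms(2) by blast
next
  fix P :: "'p \<times> (real^'r) \<Rightarrow> real"
  assume "\<exists>g\<in>F. \<exists>e. P = affine_in_fibre g e"
  then obtain g e where "g \<in> F" and P: "P = affine_in_fibre g e" by blast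
  have "((\<lambda>t. D (\<lambda>q. P (q, w + t *\<^sub>R axis a 1)) p) has_real_derivative D (\<lambda>q. dw a P (q, w)) p) (at 0)"
    if "D \<in> {Dx, Dy}" for D a p w
    unfolding P dw_affine_in_fibre total_derivative_affine_in_fibre_slice[OF assms(1) that \<open>g \<in> F\<close>]
      total_derivative_const[OF assms(1) that] by simp
  moreover have "dw a P = affine_in_fibre (\<lambda>_. e a) (\<lambda>_. 0)" for a
    unfolding P dw_affine_in_fibre by (auto simp: affine_in_fibre_def)
  ultimately show "\<exists>Q. P = Q \<and> (\<forall>w. (\<lambda>p. Q (p, w)) \<in> F) \<and>
      (\<forall>p w. (\<lambda>v. Q (p, v)) differentiable (at w)) \<and>
      (\<forall>a p w. \<forall>D\<in>{Dx, Dy}. ((\<lambda>t. D (\<lambda>q. Q (q, w + t *\<^sub>R axis a 1)) p) has_real_derivative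
         D (\<lambda>q. dw a Q (q, w)) p) (at 0)) \<and>
      (\<forall>a. (\<exists>g\<in>F. \<exists>e. dw a Q = affine_in_fibre g e) \<or> cov_smooth F Dx Dy (dw a Q))"
    using affine_in_fibre_slice[OF assms(1) \<open>g \<in> F\<close>] affine_in_fibre_differentiable
      diff_conn_eq_const[OF assms(1)] by (auto simp: P)
qed

lemma tD_affine_in_fibre:
  assumes "diff_conn_eq F Dx Dy" "D \<in> {Dx, Dy}" "f \<in> F"
  shows "tD D Zs (affine_in_fibre f c) = (\<lambda>(p, w). D f p + (\<Sum>a\<in>UNIV. Zs a p * c a))"
  unfolding tD_def dw_affine_in_fibre total_derivative_affine_in_fibre_slice[OF assms] ..

lemma in_L_tau_if_pullback_trivial:
  fixes Xs Ys :: "'r::finite \<Rightarrow> 'p \<Rightarrow> real"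
  assumes irreducible: "irreducible_cov F Dx Dy Xs Ys"
    and "trivial_cl (cov_funs F Dx Dy) (tD Dx Xs) (tD Dy Ys)
           (pullback X :: 'p \<times> (real^'r) \<Rightarrow> real) (pullback Y)"
  shows "in_L_tau F Dx Dy Xs Ys X Y"
proof -
  obtain G where G: "cov_smooth F Dx Dy G"
    and GX: "tD Dx Xs G = pullback X" and GY: "tD Dy Ys G = pullback Y"
    using assms(2) unfolding trivial_cl_def cov_funs_def by auto
  have "\<exists>k. dw a G = (\<lambda>_. k)" for a
    using irreducible cov_smooth_dw[OF G] tD_dw_eq_0[OF G _ GX] tD_dw_eq_0[OF G _ GY]
    unfolding irreducible_cov_def cov_funs_def by simp
  then obtain c where c: "\<And>a. dw a G = (\<lambda>_. c a)" by metis
  have potential: "(\<lambda>p. Z p - (\<Sum>a\<in>UNIV. c a * Zs a p)) = D (\<lambda>q. G (q, 0))"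
    if "tD D Zs G = pullback Z" for D Zs Z
  proof
    fix p
    have "D (\<lambda>q. G (q, 0)) p + (\<Sum>a\<in>UNIV. c a * Zs a p) = Z p"
      using fun_cong[OF that, of "(p, 0)"] by (simp add: tD_def c pullback_def mult.commute)
    then show "Z p - (\<Sum>a\<in>UNIV. c a * Zs a p) = D (\<lambda>q. G (q, 0)) p" by linarith
  qed
  show ?thesis
    unfolding in_L_tau_def trivial_cl_def
    using cov_smooth_slice[OF G] potential[OF GX] potential[OF GY] by blast
qed

lemma pullback_trivial_if_in_L_tau:
  fixes Xs Ys :: "'r::finite \<Rightarrow> 'p \<Rightarrow> real"
  assumes dc: "diff_conn_eq F Dx Dy" and "in_L_tau F Dx Dy Xs Ys X Y"
  shows "trivial_cl (cov_funs F Dx Dy) (tD Dx Xs) (tD Dy Ys)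
           (pullback X :: 'p \<times> (real^'r) \<Rightarrow> real) (pullback Y)"
proof -
  obtain c P where "P \<in> F"
    and PX: "(\<lambda>p. X p - (\<Sum>a\<in>UNIV. c a * Xs a p)) = Dx P"
    and PY: "(\<lambda>p. Y p - (\<Sum>a\<in>UNIV. c a * Ys a p)) = Dy P"
    using assms(2) unfolding in_L_tau_def trivial_cl_def by blast
  have lift: "tD D Zs (affine_in_fibre P c) = (pullback Z :: 'p \<times> (real^'r) \<Rightarrow> real)"
    if "D \<in> {Dx, Dy}" and "(\<lambda>p. Z p - (\<Sum>a\<in>UNIV. c a * Zs a p)) = D P" for D Zs Z
  proof
    fix z :: "'p \<times> (real^'r)"
    obtain p w where z: "z = (p, w)" by (cases z)
    have "Z p - (\<Sum>a\<in>UNIV. c a * Zs a p) = D P p" using fun_cong[OF that(2), of p] .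
    then show "tD D Zs (affine_in_fibre P c) z = pullback Z z"
      by (simp add: tD_affine_in_fibre[OF dc that(1) \<open>P \<in> F\<close>] z pullback_def mult.commute)
  qed
  show ?thesis
    unfolding trivial_cl_def cov_funs_def
    using cov_smooth_affine_in_fibre[OF dc \<open>P \<in> F\<close>] PX PY
      lift[where D=Dx and Zs=Xs and Z=X] lift[where D=Dy and Zs=Ys and Z=Y]
    by (auto intro!: exI[of _ "affine_in_fibre P c"])
qed

theorem mainTheorem3:
  fixes F :: "('p \<Rightarrow> real) set"
    and Dx Dy :: "('p \<Rightarrow> real) \<Rightarrow> ('p \<Rightarrow> real)"
    and Xs Ys :: "'r::finite \<Rightarrow> 'p \<Rightarrow> real"
    and X Y :: "'p \<Rightarrow> real"
  assumes "diff_conn_eq F Dx Dy"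
    and "abelian_covering F Dx Dy Xs Ys"
    and "irreducible_cov F Dx Dy Xs Ys"
    and "conservation_law F Dx Dy X Y"
    and "\<not> trivial_cl F Dx Dy X Y"
  shows "trivial_cl (cov_funs F Dx Dy) (tD Dx Xs) (tD Dy Ys)
            (pullback X :: 'p \<times> (real^'r) \<Rightarrow> real) (pullback Y)
         \<longleftrightarrow> in_L_tau F Dx Dy Xs Ys X Y"
  using in_L_tau_if_pullback_trivial[OF assms(3)] pullback_trivial_if_in_L_tau[OF assms(1)] by blast

end
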